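(* Let $p, q, r$ be positive integers with $p \le q$ and $r \ge 2$, and let $\lambda\in\Lambda^{p,q,r}_{+}$. Then: (1) If $p=q=1$: $\mathcal{F}(\lambda;\Lambda^{1,1,r}) \simeq \mathcal{F}(T^{1,1,r}_{1,1,2}(\lambda);\Lambda^{1,1,2})$ if $\lambda\in\operatorname{Fix}(T^{1,1,2}_{1,1,r}\circ T^{1,1,r}_{1,1,2})$, and $\mathcal{F}(\lambda;\Lambda^{1,1,r})\simeq\mathrm{pt}$ otherwise. (2) If $p=1$ and $q\ge 2$: $\mathcal{F}(\lambda;\Lambda^{1,q,r}) \simeq \mathcal{F}(T^{1,q,r}_{1,2,2}(\lambda);\Lambda^{1,2,2})$ if $\lambda\in\operatorname{Fix}(T^{1,2,2}_{1,q,r}\circ T^{1,q,r}_{1,2,2})$, and $\mathcal{F}(\lambda;\Lambda^{1,q,r})\simeq\mathrm{pt}$ otherwise. (3) If $2\le p\le q$: $\mathcal{F}(\lambda;\Lambda^{p,q,r}) \simeq \mathcal{F}(T^{p,q,r}_{2,2,2}(\lambda);\Lambda^{2,2,2})$ if $\lambda\in\operatorname{Fix}(T^{2,2,2}_{p,q,r}\circ T^{p,q,r}_{2,2,2})$, and $\mathcal{F}(\lambda;\Lambda^{p,q,r})\simeq\mathrm{pt}$ otherwise. Here $\simeq$ is homotopy equivalence and $\mathrm{pt}$ the one-point space.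
   Context: $\mathbb{N}=\{0,1,2,\dots\}$. For an additive commutative monoid $\Lambda$ that is cancellative and has no non-trivial invertible elements, define the partial order $\lambda \le \mu$ iff there is $\nu\in\Lambda$ with $\lambda+\nu=\mu$; $\lambda<\mu$ means $\lambda\le\mu$, $\lambda\ne\mu$. Let $\Lambda_+=\Lambda\setminus\{0\}$. For a poset $P$, $|P|$ is the geometric realization of its order complex and $(x,y)_P=\{z\in P:x<z<y\}$. The Frobenius complex is $\mathcal{F}(\lambda;\Lambda)=|(0,\lambda)_\Lambda|$ for $\lambda\in\Lambda_+$. For positive integers $p,q,r$, $\Lambda^{p,q,r}=\langle a,b,c\mid pa+qb=rc\rangle$ is the quotient of the free commutative monoid $\mathbb{N}a\oplus\mathbb{N}b\oplus\mathbb{N}c$ by the congruence generated by $\lambda+pa+qb\sim\lambda+rc$. For positive integers $p,q$, $\tau^p_q:\mathbb{N}\to\mathbb{N}$ is $\tau^p_q(mp+n)=mq+\min\{n,q-1\}$ ($m\in\mathbb{N}$, $0\le n<p$). For positive integers $p,q,r,s,t,u$, the transition map $T^{p,q,r}_{s,t,u}:\Lambda^{p,q,r}\to\Lambda^{s,t,u}$ is $T^{p,q,r}_{s,t,u}(ma+nb+kc)=\tau^p_s(m)a+\tau^q_t(n)b+\tau^r_u(k)c$. For a function $f$ on a set $X$, $\operatorname{Fix} f=\{x\in X:f(x)=x\}$. *)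

theory Defs
  imports "HOL-Analysis.Analysis"
begin

type_synonym triple = "nat \<times> nat \<times> nat"

text \<open>Elements m a + n b + k c of the free commutative monoid N a + N b + N c
  are represented as triples (m, n, k).\<close>

definition tadd :: "triple \<Rightarrow> triple \<Rightarrow> triple" where
  "tadd x y = (case x of (m, n, k) \<Rightarrow> case y of (m', n', k') \<Rightarrow> (m + m', n + n', k + k'))"

definition rstep :: "nat \<Rightarrow> nat \<Rightarrow> nat \<Rightarrow> triple \<Rightarrow> triple \<Rightarrow> bool" where
  "rstep p q r x y \<longleftrightarrow> (\<exists>l. (x = tadd l (p, q, 0) \<and> y = tadd l (0, 0, r))
                           \<or> (y = tadd l (p, q, 0) \<and> x = tadd l (0, 0, r)))"

text \<open>The congruence generated by the relation (its equivalence closure, which is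
  already compatible with addition since the generating relation is translation invariant).\<close>
definition lrel :: "nat \<Rightarrow> nat \<Rightarrow> nat \<Rightarrow> triple \<Rightarrow> triple \<Rightarrow> bool" where
  "lrel p q r = (rstep p q r)\<^sup>*\<^sup>*"

definition cls :: "nat \<Rightarrow> nat \<Rightarrow> nat \<Rightarrow> triple \<Rightarrow> triple set" where
  "cls p q r x = {y. lrel p q r x y}"

definition Lam :: "nat \<Rightarrow> nat \<Rightarrow> nat \<Rightarrow> triple set set" where
  "Lam p q r = range (cls p q r)"

definition Lzero :: "nat \<Rightarrow> nat \<Rightarrow> nat \<Rightarrow> triple set" where
  "Lzero p q r = cls p q r (0, 0, 0)"

definition Lplus :: "nat \<Rightarrow> nat \<Rightarrow> nat \<Rightarrow> triple set set" where
  "Lplus p q r = Lam p q r - {Lzero p q r}"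

definition Lle :: "nat \<Rightarrow> nat \<Rightarrow> nat \<Rightarrow> triple set \<Rightarrow> triple set \<Rightarrow> bool" where
  "Lle p q r X Y \<longleftrightarrow> (\<exists>x z. X = cls p q r x \<and> Y = cls p q r (tadd x z))"

definition Lless :: "nat \<Rightarrow> nat \<Rightarrow> nat \<Rightarrow> triple set \<Rightarrow> triple set \<Rightarrow> bool" where
  "Lless p q r X Y \<longleftrightarrow> Lle p q r X Y \<and> X \<noteq> Y"

definition open_interval :: "'a set \<Rightarrow> ('a \<Rightarrow> 'a \<Rightarrow> bool) \<Rightarrow> 'a \<Rightarrow> 'a \<Rightarrow> 'a set" where
  "open_interval P lt x y = {z \<in> P. lt x z \<and> lt z y}"

text \<open>Geometric realization of the order complex of a poset (P, \<le>): points are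
  finitely supported convex combinations of vertices whose support is a chain,
  topologised as a subspace of R^P (this is the usual realization for finite P).\<close>
definition order_complex_realization :: "'a set \<Rightarrow> ('a \<Rightarrow> 'a \<Rightarrow> bool) \<Rightarrow> ('a \<Rightarrow> real) topology" where
  "order_complex_realization P le =
     subtopology (product_topology (\<lambda>_. euclideanreal) P)
       {t \<in> extensional P.
          (\<forall>x\<in>P. 0 \<le> t x) \<and>
          finite {x \<in> P. t x \<noteq> 0} \<and>
          sum t {x \<in> P. t x \<noteq> 0} = 1 \<and>
          (\<forall>x\<in>P. \<forall>y\<in>P. t x \<noteq> 0 \<and> t y \<noteq> 0 \<longrightarrow> le x y \<or> le y x)}"

definition frobenius_complex :: "nat \<Rightarrow> nat \<Rightarrow> nat \<Rightarrow> triple set \<Rightarrow> (triple set \<Rightarrow> real) topology" where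
  "frobenius_complex p q r lam =
     order_complex_realization (open_interval (Lam p q r) (Lless p q r) (Lzero p q r) lam) (Lle p q r)"

definition tau :: "nat \<Rightarrow> nat \<Rightarrow> nat \<Rightarrow> nat" where
  "tau p q x = (x div p) * q + min (x mod p) (q - 1)"

definition transition :: "nat \<Rightarrow> nat \<Rightarrow> nat \<Rightarrow> nat \<Rightarrow> nat \<Rightarrow> nat \<Rightarrow> triple set \<Rightarrow> triple set" where
  "transition p q r s t u X =
     (case (SOME x. x \<in> X) of (m, n, k) \<Rightarrow> cls s t u (tau p s m, tau q t n, tau r u k))"

definition point_space :: "unit topology" where
  "point_space = discrete_topology {()}"

end

theory Submission
  imports Defs
begin

text \<open>Let \<open>s \<le> p\<close>, \<open>t \<le> q\<close>, \<open>u \<le> r\<close>, and let \<open>T\<close> and \<open>T'\<close> be the transition maps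
  \<open>\<Lambda>^{p,q,r} \<rightarrow> \<Lambda>^{s,t,u}\<close> and back. They are order preserving, \<open>T \<circ> T' = id\<close> and
  \<open>T' \<circ> T \<le> id\<close>, because \<open>\<tau>^p_s \<circ> \<tau>^s_p = id\<close> and \<open>\<tau>^s_p \<circ> \<tau>^p_s \<le> id\<close>; under the side
  conditions on \<open>s, t, u\<close> both map nonzero elements to nonzero elements. If \<open>T' (T \<lambda>) = \<lambda>\<close>,
  they restrict to a Galois insertion between the finite intervals \<open>(0, \<lambda>)\<close> and \<open>(0, T \<lambda>)\<close>;
  otherwise \<open>T' (T \<lambda>)\<close> lies in \<open>(0, \<lambda>)\<close> and the comparisons \<open>id \<ge> T' \<circ> T \<le> const (T' (T \<lambda>))\<close>
  contract \<open>(0, \<lambda>)\<close>. Both conclusions follow because comparable order-preserving maps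
  induce homotopic maps of order complexes.\<close>

section \<open>Order complexes of finite posets\<close>

definition order_complex_points :: "'a set \<Rightarrow> ('a \<Rightarrow> 'a \<Rightarrow> bool) \<Rightarrow> ('a \<Rightarrow> real) set" where
  "order_complex_points P le =
     {t \<in> extensional P.
        (\<forall>x\<in>P. 0 \<le> t x) \<and>
        finite {x \<in> P. t x \<noteq> 0} \<and>
        sum t {x \<in> P. t x \<noteq> 0} = 1 \<and>
        (\<forall>x\<in>P. \<forall>y\<in>P. t x \<noteq> 0 \<and> t y \<noteq> 0 \<longrightarrow> le x y \<or> le y x)}"

lemma order_complex_realization_eq:
  "order_complex_realization P le = subtopology (powertop_real P) (order_complex_points P le)"
  unfolding order_complex_realization_def order_complex_points_def by simp

lemma topspace_order_complex_realization:
  "topspace (order_complex_realization P le) = order_complex_points P le"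
  unfolding order_complex_realization_eq by (auto simp: order_complex_points_def PiE_def)

lemma order_complex_points_iff:
  assumes "finite P"
  shows "t \<in> order_complex_points P le \<longleftrightarrow>
           t \<in> extensional P \<and> (\<forall>x\<in>P. 0 \<le> t x) \<and> sum t P = 1 \<and>
           (\<forall>x\<in>P. \<forall>y\<in>P. t x \<noteq> 0 \<and> t y \<noteq> 0 \<longrightarrow> le x y \<or> le y x)"
proof -
  have "sum t {x \<in> P. t x \<noteq> 0} = sum t P"
    using assms by (intro sum.mono_neutral_left) simp_all
  then show ?thesis
    using assms unfolding order_complex_points_def by (simp add: finite_subset)
qed

definition realization_map :: "'a set \<Rightarrow> 'b set \<Rightarrow> ('a \<Rightarrow> 'b) \<Rightarrow> ('a \<Rightarrow> real) \<Rightarrow> 'b \<Rightarrow> real" where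
  "realization_map P Q g t = restrict (\<lambda>y. sum t {x \<in> P. g x = y}) Q"

lemma realization_map_cong:
  "(\<And>x. x \<in> P \<Longrightarrow> g x = g' x) \<Longrightarrow> realization_map P Q g = realization_map P Q g'"
proof -
  assume "\<And>x. x \<in> P \<Longrightarrow> g x = g' x"
  then have "\<And>y. {x \<in> P. g x = y} = {x \<in> P. g' x = y}" by auto
  then show ?thesis unfolding realization_map_def by simp
qed

lemma realization_map_id:
  assumes "t \<in> extensional P"
  shows "realization_map P P (\<lambda>x. x) t = t"
proof
  fix z
  show "realization_map P P (\<lambda>x. x) t z = t z"
  proof (cases "z \<in> P")
    case True
    then have "{x \<in> P. x = z} = {z}" by auto
    with True show ?thesis unfolding realization_map_def by simp
  next
    case False
    then show ?thesis
      unfolding realization_map_def using extensional_arb[OF assms False] by simp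
  qed
qed

lemma realization_map_comp:
  assumes "finite P" "finite Q" "g ` P \<subseteq> Q"
  shows "realization_map Q R h (realization_map P Q g t) = realization_map P R (\<lambda>x. h (g x)) t"
proof
  fix z
  show "realization_map Q R h (realization_map P Q g t) z = realization_map P R (\<lambda>x. h (g x)) t z"
  proof (cases "z \<in> R")
    case True
    have "(\<Sum>y\<in>{y \<in> Q. h y = z}. sum t {x \<in> P. g x = y})
        = (\<Sum>y\<in>{y \<in> Q. h y = z}. sum t {x \<in> {x \<in> P. h (g x) = z}. g x = y})"
      by (intro sum.cong) auto
    also have "\<dots> = sum t {x \<in> P. h (g x) = z}"
      by (rule sum.group) (use assms in auto)
    finally show ?thesis
      using True by (simp add: realization_map_def)
  qed (simp add: realization_map_def)
qed

lemma realization_map_const: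
  assumes "finite P" "m \<in> P" "t \<in> order_complex_points P le"
  shows "realization_map P P (\<lambda>_. m) t = restrict (\<lambda>y. if y = m then 1 else 0) P"
proof -
  have "sum t P = 1" using assms by (simp add: order_complex_points_iff)
  moreover have "\<And>y. {x \<in> P. m = y} = (if y = m then P else {})" by auto
  ultimately show ?thesis unfolding realization_map_def by (intro restrict_ext) simp
qed

text \<open>For \<open>g \<le> h\<close>, at time \<open>s\<close> the top part of mass \<open>s\<close> of the chain carrying \<open>t\<close> is pushed
  forward along \<open>h\<close> and the rest along \<open>g\<close>. Unlike the straight-line homotopy, this keeps the
  image carried by a chain.\<close>

definition upper_weight :: "'a set \<Rightarrow> ('a \<Rightarrow> 'a \<Rightarrow> bool) \<Rightarrow> real \<Rightarrow> ('a \<Rightarrow> real) \<Rightarrow> 'a \<Rightarrow> real" where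
  "upper_weight P le s t x = min (t x) (max 0 (s - sum t {y \<in> P. le x y \<and> y \<noteq> x}))"

definition order_homotopy ::
    "'a set \<Rightarrow> ('a \<Rightarrow> 'a \<Rightarrow> bool) \<Rightarrow> 'b set \<Rightarrow> ('a \<Rightarrow> 'b) \<Rightarrow> ('a \<Rightarrow> 'b) \<Rightarrow> real \<times> ('a \<Rightarrow> real) \<Rightarrow> 'b \<Rightarrow> real" where
  "order_homotopy P le Q g h st =
     restrict (\<lambda>z. sum (\<lambda>x. upper_weight P le (fst st) (snd st) x) {x \<in> P. h x = z}
                 + sum (\<lambda>x. snd st x - upper_weight P le (fst st) (snd st) x) {x \<in> P. g x = z}) Q"

lemma continuous_map_order_homotopy:
  assumes "finite P"
  shows "continuous_map (prod_topology (top_of_set {0..1}) (order_complex_realization P le))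
           (powertop_real Q) (order_homotopy P le Q g h)"
proof -
  let ?X = "prod_topology (top_of_set {0..1::real}) (order_complex_realization P le)"
  have coord: "continuous_map ?X euclideanreal (\<lambda>st. snd st x)" if "x \<in> P" for x
  proof -
    have "continuous_map (order_complex_realization P le) euclideanreal (\<lambda>t. t x)"
      unfolding order_complex_realization_eq using that
      by (intro continuous_map_from_subtopology continuous_map_product_projection)
    then show ?thesis
      using continuous_map_compose[OF continuous_map_snd] by (simp add: o_def)
  qed
  have time: "continuous_map ?X euclideanreal fst"
    by (rule continuous_map_into_fulltopology[OF continuous_map_fst])
  have weight: "continuous_map ?X euclideanreal (\<lambda>st. upper_weight P le (fst st) (snd st) x)"
    if "x \<in> P" for x
    unfolding upper_weight_def using that assms
    by (intro continuous_map_real_min continuous_map_real_max continuous_map_diff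
        continuous_map_sum coord time) auto
  show ?thesis
    unfolding continuous_map_componentwise
  proof (intro conjI ballI)
    show "order_homotopy P le Q g h ` topspace ?X \<subseteq> extensional Q"
      unfolding order_homotopy_def by auto
    fix z assume "z \<in> Q"
    then show "continuous_map ?X euclideanreal (\<lambda>st. order_homotopy P le Q g h st z)"
      unfolding order_homotopy_def restrict_apply'[OF \<open>z \<in> Q\<close>] using assms
      by (intro continuous_map_add continuous_map_diff continuous_map_sum weight coord) auto
  qed
qed

lemma upper_weight_bounds:
  assumes "0 \<le> t x"
  shows "0 \<le> upper_weight P le s t x" "upper_weight P le s t x \<le> t x"
  using assms unfolding upper_weight_def by auto

lemma upper_weight_0:
  assumes "\<forall>y\<in>P. 0 \<le> t y" "x \<in> P"
  shows "upper_weight P le 0 t x = 0"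
proof -
  have "0 \<le> sum t {y \<in> P. le x y \<and> y \<noteq> x}" using assms by (intro sum_nonneg) auto
  then show ?thesis using assms unfolding upper_weight_def by auto
qed

lemma upper_weight_1:
  assumes "finite P" "\<forall>y\<in>P. 0 \<le> t y" "sum t P = 1" "x \<in> P"
  shows "upper_weight P le 1 t x = t x"
proof -
  have "t x + sum t {y \<in> P. le x y \<and> y \<noteq> x} = sum t (insert x {y \<in> P. le x y \<and> y \<noteq> x})"
    using assms by (subst sum.insert) auto
  also have "\<dots> \<le> sum t P"
    by (rule sum_mono2) (use assms in auto)
  finally show ?thesis using assms unfolding upper_weight_def by auto
qed

lemma upper_weight_full_above:
  assumes "finite P" "\<forall>y\<in>P. 0 \<le> t y" "transp_on P le" "antisymp_on P le"
    and "x \<in> P" "y \<in> P" "le x y" "x \<noteq> y" "upper_weight P le s t x \<noteq> 0"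
  shows "upper_weight P le s t y = t y"
proof -
  let ?above = "\<lambda>x. {z \<in> P. le x z \<and> z \<noteq> x}"
  have sub: "insert y (?above y) \<subseteq> ?above x"
    using assms(3-8) by (auto dest: transp_onD antisymp_onD)
  have "t y + sum t (?above y) = sum t (insert y (?above y))"
    using assms(1) by (simp add: sum.insert)
  also have "\<dots> \<le> sum t (?above x)"
    using assms(1,2) sub by (intro sum_mono2) auto
  finally have "t y + sum t (?above y) \<le> sum t (?above x)" .
  moreover have "sum t (?above x) < s"
    using assms(2,5,9) unfolding upper_weight_def by (auto simp: min_def max_def split: if_splits)
  ultimately have "t y \<le> max 0 (s - sum t (?above y))"
    by linarith
  then show ?thesis
    unfolding upper_weight_def by (simp add: min_absorb1)
qed

lemma order_homotopy_in_points:
  assumes "finite P" "finite Q" "transp_on P le" "antisymp_on P le" "transp_on Q le'"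
    and "g ` P \<subseteq> Q" "h ` P \<subseteq> Q" "monotone_on P le le' g" "monotone_on P le le' h"
    and "\<And>x. x \<in> P \<Longrightarrow> le' (g x) (h x)"
    and "t \<in> order_complex_points P le"
  shows "order_homotopy P le Q g h (s, t) \<in> order_complex_points Q le'"
proof -
  define a where "a = upper_weight P le s t"
  define H where "H = order_homotopy P le Q g h (s, t)"
  have t: "t \<in> extensional P" "\<forall>x\<in>P. 0 \<le> t x" "sum t P = 1"
    and chain: "\<And>x y. x \<in> P \<Longrightarrow> y \<in> P \<Longrightarrow> t x \<noteq> 0 \<Longrightarrow> t y \<noteq> 0 \<Longrightarrow> le x y \<or> le y x"
    using assms by (auto simp: order_complex_points_iff)
  have a: "0 \<le> a x" "a x \<le> t x" if "x \<in> P" for x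
    using t(2) that unfolding a_def by (simp_all add: upper_weight_bounds)
  have H: "H z = sum a {x \<in> P. h x = z} + sum (\<lambda>x. t x - a x) {x \<in> P. g x = z}" if "z \<in> Q" for z
    using that unfolding H_def order_homotopy_def a_def by simp
  have "sum H Q = sum a P + sum (\<lambda>x. t x - a x) P"
    using sum.group[OF assms(1,2,7), of a] sum.group[OF assms(1,2,6), of "\<lambda>x. t x - a x"]
    by (simp add: H sum.distrib)
  also have "\<dots> = 1" using t by (simp add: sum_subtractf)
  finally have total: "sum H Q = 1" .
  have support: "(\<exists>x\<in>P. h x = z \<and> a x \<noteq> 0) \<or> (\<exists>x\<in>P. g x = z \<and> t x - a x \<noteq> 0)"
    if "z \<in> Q" "H z \<noteq> 0" for z
  proof -
    have "sum a {x \<in> P. h x = z} \<noteq> 0 \<or> sum (\<lambda>x. t x - a x) {x \<in> P. g x = z} \<noteq> 0"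
      using that H by auto
    then show ?thesis
      by (elim disjE sum.not_neutral_contains_not_neutral) blast+
  qed
  have crossing: "le' (g y) (h x)" if "x \<in> P" "y \<in> P" "a x \<noteq> 0" "t y - a y \<noteq> 0" for x y
  proof -
    have "t x \<noteq> 0" using a[OF that(1)] that(3) by auto
    moreover have "t y \<noteq> 0" using a[OF that(2)] that(4) by auto
    ultimately have "le x y \<or> le y x" using chain that by blast
    moreover have "\<not> (le x y \<and> x \<noteq> y)"
    proof
      assume "le x y \<and> x \<noteq> y"
      then have "a y = t y"
        using upper_weight_full_above[OF assms(1) t(2) assms(3,4) that(1,2)] that(3)
        unfolding a_def by blast
      with that(4) show False by simp
    qed
    ultimately have "le y x" by blast
    then have "le' (g y) (g x)" using monotone_onD[OF assms(8)] that(1,2) by blast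
    moreover have "le' (g x) (h x)" using assms(10) that(1) .
    moreover have "g y \<in> Q" "g x \<in> Q" "h x \<in> Q" using assms(6,7) that(1,2) by auto
    ultimately show ?thesis using transp_onD[OF assms(5)] by blast
  qed
  have "le' z w \<or> le' w z" if zw: "z \<in> Q" "w \<in> Q" "H z \<noteq> 0" "H w \<noteq> 0" for z w
  proof -
    have nz: "t x \<noteq> 0" if "x \<in> P" "a x \<noteq> 0 \<or> t x - a x \<noteq> 0" for x
      using a that by fastforce
    obtain x where x: "x \<in> P" "h x = z \<and> a x \<noteq> 0 \<or> g x = z \<and> t x - a x \<noteq> 0"
      using support[OF zw(1,3)] by blast
    obtain y where y: "y \<in> P" "h y = w \<and> a y \<noteq> 0 \<or> g y = w \<and> t y - a y \<noteq> 0"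
      using support[OF zw(2,4)] by blast
    have "le x y \<or> le y x" using chain[OF x(1) y(1)] nz x y by blast
    then show ?thesis
      using x(2) y(2) crossing[OF x(1) y(1)] crossing[OF y(1) x(1)]
        monotone_onD[OF assms(8) x(1) y(1)] monotone_onD[OF assms(8) y(1) x(1)]
        monotone_onD[OF assms(9) x(1) y(1)] monotone_onD[OF assms(9) y(1) x(1)]
      by blast
  qed
  with H total a show ?thesis
    unfolding H_def[symmetric] order_complex_points_iff[OF assms(2)]
    by (auto simp: H_def order_homotopy_def intro!: add_nonneg_nonneg sum_nonneg)
qed

lemma order_homotopy_eq:
  assumes "\<And>x. x \<in> P \<Longrightarrow> upper_weight P le s t x = w x"
  shows "order_homotopy P le Q g h (s, t)
           = restrict (\<lambda>z. sum w {x \<in> P. h x = z} + sum (\<lambda>x. t x - w x) {x \<in> P. g x = z}) Q"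
  unfolding order_homotopy_def using assms
  by (intro restrict_ext arg_cong2[where f="(+)"] sum.cong) auto

lemma order_homotopy_0:
  assumes "t \<in> order_complex_points P le"
  shows "order_homotopy P le Q g h (0, t) = realization_map P Q g t"
  using assms upper_weight_0
  by (subst order_homotopy_eq[where w="\<lambda>_. 0"]) (auto simp: order_complex_points_def realization_map_def)

lemma order_homotopy_1:
  assumes "finite P" "t \<in> order_complex_points P le"
  shows "order_homotopy P le Q g h (1, t) = realization_map P Q h t"
  using assms upper_weight_1
  by (subst order_homotopy_eq[where w=t]) (auto simp: order_complex_points_iff realization_map_def)

lemma homotopic_realization_maps:
  assumes "finite P" "finite Q" "transp_on P le" "antisymp_on P le" "transp_on Q le'"
    and "g ` P \<subseteq> Q" "h ` P \<subseteq> Q" "monotone_on P le le' g" "monotone_on P le le' h"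
    and "\<And>x. x \<in> P \<Longrightarrow> le' (g x) (h x)"
  shows "homotopic_with (\<lambda>_. True) (order_complex_realization P le) (order_complex_realization Q le')
           (realization_map P Q g) (realization_map P Q h)"
proof -
  let ?X = "prod_topology (top_of_set {0..1::real}) (order_complex_realization P le)"
  have "continuous_map ?X (order_complex_realization Q le') (order_homotopy P le Q g h)"
    unfolding order_complex_realization_eq[of Q] continuous_map_in_subtopology
    using continuous_map_order_homotopy[OF assms(1)] order_homotopy_in_points[OF assms]
    by (auto simp: topspace_order_complex_realization)
  then have "homotopic_with (\<lambda>_. True) (order_complex_realization P le) (order_complex_realization Q le')
      (\<lambda>t. order_homotopy P le Q g h (0, t)) (\<lambda>t. order_homotopy P le Q g h (1, t))"
    unfolding homotopic_with_def by blast
  then show ?thesis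
    by (rule homotopic_with_eq)
      (simp_all add: topspace_order_complex_realization order_homotopy_0 order_homotopy_1 assms(1))
qed

lemma continuous_map_realization_map:
  assumes "finite P" "finite Q" "transp_on P le" "antisymp_on P le" "reflp_on Q le'" "transp_on Q le'"
    and "g ` P \<subseteq> Q" "monotone_on P le le' g"
  shows "continuous_map (order_complex_realization P le) (order_complex_realization Q le')
           (realization_map P Q g)"
  using homotopic_realization_maps[OF assms(1-4,6,7,7,8,8)] assms(5,7)
  by (meson homotopic_with_imp_continuous_maps image_subset_iff reflp_onD)

lemma realization_map_id_on_points:
  "t \<in> topspace (order_complex_realization P le) \<Longrightarrow> realization_map P P (\<lambda>x. x) t = t"
  by (simp add: topspace_order_complex_realization order_complex_points_def realization_map_id)

lemma order_complex_realization_homotopy_equivalent: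
  assumes "finite P" "finite Q"
    and "reflp_on P le" "transp_on P le" "antisymp_on P le"
    and "reflp_on Q le'" "transp_on Q le'" "antisymp_on Q le'"
    and "g ` P \<subseteq> Q" "h ` Q \<subseteq> P" "monotone_on P le le' g" "monotone_on Q le' le h"
    and "\<And>y. y \<in> Q \<Longrightarrow> g (h y) = y" "\<And>x. x \<in> P \<Longrightarrow> le (h (g x)) x"
  shows "order_complex_realization P le homotopy_equivalent_space order_complex_realization Q le'"
proof -
  have cg: "continuous_map (order_complex_realization P le) (order_complex_realization Q le')
      (realization_map P Q g)"
    by (rule continuous_map_realization_map[OF assms(1,2,4,5,6,7,9,11)])
  have ch: "continuous_map (order_complex_realization Q le') (order_complex_realization P le)
      (realization_map Q P h)"
    by (rule continuous_map_realization_map[OF assms(2,1,7,8,3,4,10,12)])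
  have "homotopic_with (\<lambda>_. True) (order_complex_realization P le) (order_complex_realization P le)
      (realization_map P P (h \<circ> g)) (realization_map P P (\<lambda>x. x))"
  proof (rule homotopic_realization_maps[OF assms(1,1,4,5,4)])
    show "(h \<circ> g) ` P \<subseteq> P" using assms(9,10) by auto
    show "monotone_on P le le (h \<circ> g)" by (rule monotone_on_o[OF assms(12,11,9)])
    show "monotone_on P le le (\<lambda>x. x)" by (simp add: monotone_on_def)
  qed (use assms(14) in auto)
  then have PP: "homotopic_with (\<lambda>_. True) (order_complex_realization P le) (order_complex_realization P le)
      (realization_map Q P h \<circ> realization_map P Q g) id"
    by (rule homotopic_with_eq)
      (simp_all add: realization_map_comp[OF assms(1,2,9)] realization_map_id_on_points comp_def)
  have QQ: "homotopic_with (\<lambda>_. True) (order_complex_realization Q le') (order_complex_realization Q le')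
      (realization_map P Q g \<circ> realization_map Q P h) id"
  proof (rule homotopic_with_equal)
    show "continuous_map (order_complex_realization Q le') (order_complex_realization Q le')
        (realization_map P Q g \<circ> realization_map Q P h)"
      using cg ch by (rule continuous_map_compose[rotated])
    fix t assume "t \<in> topspace (order_complex_realization Q le')"
    have "realization_map P Q g (realization_map Q P h t) = realization_map Q Q (\<lambda>y. g (h y)) t"
      by (rule realization_map_comp[OF assms(2,1,10)])
    also have "\<dots> = realization_map Q Q (\<lambda>y. y) t"
      using assms(13) by (metis realization_map_cong)
    also have "\<dots> = t"
      using \<open>t \<in> topspace _\<close> by (rule realization_map_id_on_points)
    finally show "(realization_map P Q g \<circ> realization_map Q P h) t = id t" by simp
  qed auto
  show ?thesis
    unfolding homotopy_equivalent_space_def using cg ch PP QQ by blast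
qed

lemma homotopy_equivalent_point_space:
  assumes "a \<in> topspace X" "homotopic_with (\<lambda>_. True) X X (\<lambda>_. a) id"
  shows "X homotopy_equivalent_space point_space"
  unfolding homotopy_equivalent_space_def
proof (intro exI conjI)
  show "continuous_map X point_space (\<lambda>_. ())" by (simp add: point_space_def)
  show "continuous_map point_space X (\<lambda>_. a)" using assms(1) by (simp add: point_space_def)
  show "homotopic_with (\<lambda>_. True) X X ((\<lambda>_. a) \<circ> (\<lambda>_. ())) id" using assms(2) by (simp add: o_def)
  show "homotopic_with (\<lambda>_. True) point_space point_space ((\<lambda>_. ()) \<circ> (\<lambda>_. a)) id"
    by (simp add: point_space_def o_def id_def)
qed

text \<open>The contraction is the zigzag \<open>id \<ge> f \<le> const m\<close> of comparable maps.\<close>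

lemma order_complex_realization_contractible:
  assumes "finite P" "reflp_on P le" "transp_on P le" "antisymp_on P le"
    and "f ` P \<subseteq> P" "monotone_on P le le f" "\<And>x. x \<in> P \<Longrightarrow> le (f x) x"
    and "m \<in> P" "\<And>x. x \<in> P \<Longrightarrow> le (f x) m"
  shows "order_complex_realization P le homotopy_equivalent_space point_space"
proof (rule homotopy_equivalent_point_space)
  define d where "d = restrict (\<lambda>y. if y = m then 1 else (0::real)) P"
  have "sum d P = (\<Sum>y\<in>P. if y = m then 1 else 0)" by (rule sum.cong) (auto simp: d_def)
  also have "\<dots> = 1" using assms(1,8) by simp
  finally have "sum d P = 1" .
  then show d: "d \<in> topspace (order_complex_realization P le)"
    using assms(1,2,8) by (auto simp: topspace_order_complex_realization order_complex_points_iff d_def reflp_onD)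
  have "homotopic_with (\<lambda>_. True) (order_complex_realization P le) (order_complex_realization P le)
      (realization_map P P f) (realization_map P P (\<lambda>x. x))"
    using assms(5-7) by (intro homotopic_realization_maps[OF assms(1,1,3,4,3)]) (auto simp: monotone_on_def)
  moreover have "homotopic_with (\<lambda>_. True) (order_complex_realization P le) (order_complex_realization P le)
      (realization_map P P f) (realization_map P P (\<lambda>_. m))"
    using assms(2,5,6,8,9)
    by (intro homotopic_realization_maps[OF assms(1,1,3,4,3)]) (auto simp: monotone_on_def reflp_onD)
  ultimately have "homotopic_with (\<lambda>_. True) (order_complex_realization P le) (order_complex_realization P le)
      (realization_map P P (\<lambda>_. m)) (realization_map P P (\<lambda>x. x))"
    by (meson homotopic_with_symD homotopic_with_trans)
  then show "homotopic_with (\<lambda>_. True) (order_complex_realization P le) (order_complex_realization P le)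
      (\<lambda>_. d) id"
    by (rule homotopic_with_eq)
      (simp_all add: realization_map_id_on_points realization_map_const[OF assms(1,8)]
        topspace_order_complex_realization d_def)
qed

section \<open>Lower intervals under a retraction\<close>

lemma mem_open_interval_strict:
  "x \<in> open_interval A (\<lambda>x y. le x y \<and> x \<noteq> y) a b \<longleftrightarrow> x \<in> A \<and> le a x \<and> a \<noteq> x \<and> le x b \<and> x \<noteq> b"
  by (simp add: open_interval_def)

locale order_retraction =
  fixes L :: "'a set" and le :: "'a \<Rightarrow> 'a \<Rightarrow> bool" and bot :: 'a
    and M :: "'b set" and le' :: "'b \<Rightarrow> 'b \<Rightarrow> bool" and bot' :: 'b
    and T :: "'a \<Rightarrow> 'b" and T' :: "'b \<Rightarrow> 'a"
  assumes reflp: "reflp_on L le" and transp: "transp_on L le" and antisymp: "antisymp_on L le"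
    and reflp': "reflp_on M le'" and transp': "transp_on M le'" and antisymp': "antisymp_on M le'"
    and bot_le: "\<And>x. x \<in> L \<Longrightarrow> le bot x" and bot_le': "\<And>y. y \<in> M \<Longrightarrow> le' bot' y"
    and T_into: "T ` L \<subseteq> M" and T'_into: "T' ` M \<subseteq> L"
    and T_mono: "monotone_on L le le' T" and T'_mono: "monotone_on M le' le T'"
    and T_T': "\<And>y. y \<in> M \<Longrightarrow> T (T' y) = y"
    and T'_T_le: "\<And>x. x \<in> L \<Longrightarrow> le (T' (T x)) x"
    and T_ne_bot: "\<And>x. x \<in> L \<Longrightarrow> x \<noteq> bot \<Longrightarrow> T x \<noteq> bot'"
    and T'_ne_bot: "\<And>y. y \<in> M \<Longrightarrow> y \<noteq> bot' \<Longrightarrow> T' y \<noteq> bot"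
begin

abbreviation interval :: "'a \<Rightarrow> 'a set" where
  "interval lam \<equiv> open_interval L (\<lambda>x y. le x y \<and> x \<noteq> y) bot lam"

abbreviation interval' :: "'b \<Rightarrow> 'b set" where
  "interval' mu \<equiv> open_interval M (\<lambda>x y. le' x y \<and> x \<noteq> y) bot' mu"

lemma mem_interval: "x \<in> interval lam \<longleftrightarrow> x \<in> L \<and> x \<noteq> bot \<and> le x lam \<and> x \<noteq> lam"
  using bot_le by (auto simp: mem_open_interval_strict)

lemma mem_interval': "y \<in> interval' mu \<longleftrightarrow> y \<in> M \<and> y \<noteq> bot' \<and> le' y mu \<and> y \<noteq> mu"
  using bot_le' by (auto simp: mem_open_interval_strict)

lemma interval_subset: "interval lam \<subseteq> L"
  by (auto simp: mem_interval)

lemma interval_subset': "interval' mu \<subseteq> M"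
  by (auto simp: mem_interval')

lemma interval_poset:
  "reflp_on (interval lam) le" "transp_on (interval lam) le" "antisymp_on (interval lam) le"
  using reflp_on_subset[OF reflp] transp_on_subset[OF transp] antisymp_on_subset[OF antisymp]
    interval_subset by blast+

lemma interval_poset':
  "reflp_on (interval' mu) le'" "transp_on (interval' mu) le'" "antisymp_on (interval' mu) le'"
  using reflp_on_subset[OF reflp'] transp_on_subset[OF transp'] antisymp_on_subset[OF antisymp']
    interval_subset' by blast+

lemma T'_T_in_L: "x \<in> L \<Longrightarrow> T' (T x) \<in> L"
  using T_into T'_into by auto

lemma T'_T_in_interval:
  assumes "lam \<in> L" "x \<in> interval lam"
  shows "T' (T x) \<in> interval lam"
proof -
  have x: "x \<in> L" "x \<noteq> bot" "le x lam" "x \<noteq> lam" using assms(2) by (auto simp: mem_interval)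
  have "T' (T x) \<noteq> bot" using x T_into T_ne_bot T'_ne_bot by blast
  moreover have "le (T' (T x)) lam"
    using transp_onD[OF transp T'_T_in_L[OF x(1)] x(1) assms(1) T'_T_le[OF x(1)] x(3)] .
  moreover have "T' (T x) \<noteq> lam"
    using T'_T_le[OF x(1)] antisymp_onD[OF antisymp x(1) assms(1) x(3)] x(4) by auto
  ultimately show ?thesis using T'_T_in_L[OF x(1)] by (simp add: mem_interval)
qed

lemma interval_homotopy_equivalent:
  assumes "lam \<in> L" "T' (T lam) = lam" "finite (interval lam)" "finite (interval' (T lam))"
  shows "order_complex_realization (interval lam) le homotopy_equivalent_space
           order_complex_realization (interval' (T lam)) le'"
proof (rule order_complex_realization_homotopy_equivalent[OF assms(3,4) interval_poset interval_poset'])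
  show "T ` interval lam \<subseteq> interval' (T lam)"
  proof
    fix y assume "y \<in> T ` interval lam"
    then obtain x where y: "y = T x" and x: "x \<in> L" "x \<noteq> bot" "le x lam" "x \<noteq> lam"
      by (auto simp: mem_interval)
    have "T x \<noteq> T lam"
      using T'_T_le[OF x(1)] antisymp_onD[OF antisymp x(1) assms(1) x(3)] x(4) assms(2) by metis
    then show "y \<in> interval' (T lam)"
      using x y assms(1) T_into T_ne_bot monotone_onD[OF T_mono] by (auto simp: mem_interval')
  qed
  show "T' ` interval' (T lam) \<subseteq> interval lam"
  proof
    fix x assume "x \<in> T' ` interval' (T lam)"
    then obtain y where x: "x = T' y" and y: "y \<in> M" "y \<noteq> bot'" "le' y (T lam)" "y \<noteq> T lam"
      by (auto simp: mem_interval')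
    have "le (T' y) lam"
      using monotone_onD[OF T'_mono y(1) _ y(3)] T_into assms by auto
    moreover have "T' y \<noteq> lam" using T_T'[OF y(1)] y(4) by metis
    ultimately show "x \<in> interval lam"
      using x y T'_into T'_ne_bot by (auto simp: mem_interval)
  qed
  show "monotone_on (interval lam) le le' T"
    using T_mono interval_subset by (rule monotone_on_subset)
  show "monotone_on (interval' (T lam)) le' le T'"
    using T'_mono interval_subset' by (rule monotone_on_subset)
  show "T (T' y) = y" if "y \<in> interval' (T lam)" for y
    using T_T' interval_subset' that by blast
  show "le (T' (T x)) x" if "x \<in> interval lam" for x
    using T'_T_le interval_subset that by blast
qed

lemma interval_contractible:
  assumes "lam \<in> L" "lam \<noteq> bot" "T' (T lam) \<noteq> lam" "finite (interval lam)"
  shows "order_complex_realization (interval lam) le homotopy_equivalent_space point_space"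
proof (rule order_complex_realization_contractible[OF assms(4) interval_poset])
  have "T lam \<in> M" using T_into assms(1) by auto
  then have "T' (T lam) \<noteq> bot" using T_ne_bot[OF assms(1,2)] T'_ne_bot by blast
  then show "T' (T lam) \<in> interval lam"
    using assms(1,3) T'_T_in_L T'_T_le by (simp add: mem_interval)
  show "(\<lambda>x. T' (T x)) ` interval lam \<subseteq> interval lam"
    using T'_T_in_interval[OF assms(1)] by auto
  have mono: "monotone_on L le le (\<lambda>x. T' (T x))"
    using monotone_on_o[OF T'_mono T_mono T_into] by (simp add: comp_def)
  then show "monotone_on (interval lam) le le (\<lambda>x. T' (T x))"
    using interval_subset by (rule monotone_on_subset)
  show "le (T' (T x)) (T' (T lam))" if "x \<in> interval lam" for x
    using monotone_onD[OF mono] that assms(1) by (auto simp: mem_interval)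
  show "le (T' (T x)) x" if "x \<in> interval lam" for x
    using T'_T_le interval_subset that by blast
qed

end

section \<open>The monoid \<open>\<Lambda>^{p,q,r}\<close>\<close>

definition Lam_eqv :: "nat \<Rightarrow> nat \<Rightarrow> nat \<Rightarrow> triple \<Rightarrow> triple \<Rightarrow> bool" where
  "Lam_eqv p q r x y \<longleftrightarrow> (\<exists>d::int.
      int (fst y) = int (fst x) + d * int p \<and>
      int (fst (snd y)) = int (fst (snd x)) + d * int q \<and>
      int (snd (snd y)) = int (snd (snd x)) - d * int r)"

lemma equivp_lrel: "equivp (lrel p q r)"
  unfolding lrel_def by (rule equivp_rtranclp) (auto simp: symp_def rstep_def)

lemma lrel_imp_Lam_eqv: "lrel p q r x y \<Longrightarrow> Lam_eqv p q r x y"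
  unfolding lrel_def
proof (induction rule: rtranclp_induct)
  case base
  show ?case unfolding Lam_eqv_def by (rule exI[of _ 0]) simp
next
  case (step y z)
  from step.IH obtain d :: int where d: "int (fst y) = int (fst x) + d * int p"
    "int (fst (snd y)) = int (fst (snd x)) + d * int q" "int (snd (snd y)) = int (snd (snd x)) - d * int r"
    unfolding Lam_eqv_def by blast
  from step.hyps(2) obtain a b c where
    "y = tadd (a, b, c) (p, q, 0) \<and> z = tadd (a, b, c) (0, 0, r)
       \<or> y = tadd (a, b, c) (0, 0, r) \<and> z = tadd (a, b, c) (p, q, 0)"
    unfolding rstep_def by (metis prod_cases3)
  then have "y = (a + p, b + q, c) \<and> z = (a, b, c + r) \<or> y = (a, b, c + r) \<and> z = (a + p, b + q, c)"
    by (simp add: tadd_def)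
  then show ?case
  proof
    assume "y = (a + p, b + q, c) \<and> z = (a, b, c + r)"
    with d show ?case unfolding Lam_eqv_def by (intro exI[of _ "d - 1"]) (auto simp: algebra_simps)
  next
    assume "y = (a, b, c + r) \<and> z = (a + p, b + q, c)"
    with d show ?case unfolding Lam_eqv_def by (intro exI[of _ "d + 1"]) (auto simp: algebra_simps)
  qed
qed

lemma lrel_shift: "lrel p q r (a, b, c + d * r) (a + d * p, b + d * q, c)"
proof (induction d arbitrary: c)
  case 0
  show ?case by (simp add: lrel_def)
next
  case (Suc d)
  have "lrel p q r (a, b, (c + r) + d * r) (a + d * p, b + d * q, c + r)"
    by (rule Suc)
  moreover have "rstep p q r (a + d * p, b + d * q, c + r) (a + Suc d * p, b + Suc d * q, c)"
    unfolding rstep_def tadd_def by (rule exI[of _ "(a + d * p, b + d * q, c)"]) simp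
  ultimately have "lrel p q r (a, b, (c + r) + d * r) (a + Suc d * p, b + Suc d * q, c)"
    unfolding lrel_def by (rule rtranclp.rtrancl_into_rtrancl)
  then show ?case by (simp add: algebra_simps)
qed

lemma Lam_eqv_imp_lrel:
  assumes "Lam_eqv p q r x y"
  shows "lrel p q r x y"
proof -
  obtain m n k m' n' k' where xy: "x = (m, n, k)" "y = (m', n', k')" by (metis prod_cases3)
  obtain d :: int where d: "int m' = int m + d * int p" "int n' = int n + d * int q"
      "int k' = int k - d * int r"
    using assms unfolding Lam_eqv_def xy by auto
  show ?thesis
  proof (cases "d \<ge> 0")
    case True
    define e where "e = nat d"
    have "int m' = int (m + e * p)" "int n' = int (n + e * q)" "int k = int (k' + e * r)"
      using d True unfolding e_def by (simp; linarith)+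
    then have "m' = m + e * p" "n' = n + e * q" "k = k' + e * r"
      by (simp_all only: of_nat_eq_iff)
    then show ?thesis unfolding xy using lrel_shift[of p q r m n k' e] by simp
  next
    case False
    define e where "e = nat (- d)"
    have "int m = int (m' + e * p)" "int n = int (n' + e * q)" "int k' = int (k + e * r)"
      using d False unfolding e_def by (simp; linarith)+
    then have "m = m' + e * p" "n = n' + e * q" "k' = k + e * r"
      by (simp_all only: of_nat_eq_iff)
    then have "lrel p q r y x" unfolding xy using lrel_shift[of p q r m' n' k e] by simp
    then show ?thesis by (rule equivp_symp[OF equivp_lrel])
  qed
qed

lemma lrel_iff_Lam_eqv: "lrel p q r x y \<longleftrightarrow> Lam_eqv p q r x y"
  using lrel_imp_Lam_eqv Lam_eqv_imp_lrel by blast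

lemma mem_cls: "x \<in> cls p q r x"
  using equivp_reflp[OF equivp_lrel] by (simp add: cls_def)

lemma cls_eq_iff: "cls p q r x = cls p q r y \<longleftrightarrow> lrel p q r x y"
proof
  assume "cls p q r x = cls p q r y"
  then have "y \<in> cls p q r x" using mem_cls by metis
  then show "lrel p q r x y" by (simp add: cls_def)
next
  assume "lrel p q r x y"
  then show "cls p q r x = cls p q r y"
    unfolding cls_def using equivp_symp[OF equivp_lrel] equivp_transp[OF equivp_lrel] by blast
qed

lemma lrel_tadd: "lrel p q r x y \<Longrightarrow> lrel p q r (tadd x z) (tadd y z)"
  unfolding lrel_iff_Lam_eqv Lam_eqv_def tadd_def by (auto split: prod.splits)

lemma tadd_0: "tadd x (0, 0, 0) = x" "tadd (0, 0, 0) x = x"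
  by (simp_all add: tadd_def split: prod.splits)

lemma tadd_assoc: "tadd (tadd x y) z = tadd x (tadd y z)"
  by (simp add: tadd_def split: prod.splits)

lemma tadd_eq_0_iff: "tadd x y = (0, 0, 0) \<longleftrightarrow> x = (0, 0, 0) \<and> y = (0, 0, 0)"
  by (auto simp: tadd_def split: prod.splits)

lemma Lam_iff: "X \<in> Lam p q r \<longleftrightarrow> (\<exists>x. X = cls p q r x)"
  unfolding Lam_def by auto

lemma Lle_cls_iff: "Lle p q r (cls p q r x) (cls p q r y) \<longleftrightarrow> (\<exists>z. lrel p q r y (tadd x z))"
proof
  assume "Lle p q r (cls p q r x) (cls p q r y)"
  then obtain x' z where x': "lrel p q r x x'" and y: "lrel p q r y (tadd x' z)"
    unfolding Lle_def cls_eq_iff by blast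
  have "lrel p q r (tadd x' z) (tadd x z)"
    using lrel_tadd equivp_symp[OF equivp_lrel x'] .
  with y show "\<exists>z. lrel p q r y (tadd x z)" using equivp_transp[OF equivp_lrel] by blast
next
  assume "\<exists>z. lrel p q r y (tadd x z)"
  then show "Lle p q r (cls p q r x) (cls p q r y)"
    unfolding Lle_def cls_eq_iff using equivp_reflp[OF equivp_lrel] by blast
qed

lemma lrel_tadd_self:
  assumes "0 < p" "0 < r" "lrel p q r x (tadd x z)"
  shows "z = (0, 0, 0)"
proof -
  obtain a b c where z: "z = (a, b, c)" by (cases z)
  from assms(3) obtain d :: int where d: "int a = d * int p" "int b = d * int q" "int c = - d * int r"
    unfolding lrel_iff_Lam_eqv Lam_eqv_def tadd_def z by (auto split: prod.splits)
  have "0 \<le> d * int p" "d * int r \<le> 0" using d(1,3) by linarith+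
  then have "0 \<le> d" "d \<le> 0" using assms(1,2) by (simp_all add: zero_le_mult_iff mult_le_0_iff)
  then have "d = 0" by simp
  with d show ?thesis unfolding z by simp
qed

lemma Lle_refl: "X \<in> Lam p q r \<Longrightarrow> Lle p q r X X"
  unfolding Lle_def by (metis Lam_iff tadd_0(1))

lemma Lle_trans:
  assumes "X \<in> Lam p q r" "Y \<in> Lam p q r" "Z \<in> Lam p q r" "Lle p q r X Y" "Lle p q r Y Z"
  shows "Lle p q r X Z"
proof -
  obtain x y z where e: "X = cls p q r x" "Y = cls p q r y" "Z = cls p q r z"
    using assms(1-3) Lam_iff by metis
  obtain u v where "lrel p q r y (tadd x u)" "lrel p q r z (tadd y v)"
    using assms(4,5) e Lle_cls_iff by metis
  then have "lrel p q r z (tadd x (tadd u v))"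
    using lrel_tadd equivp_transp[OF equivp_lrel] tadd_assoc by metis
  then show ?thesis using e Lle_cls_iff by blast
qed

lemma Lle_antisym:
  assumes "0 < p" "0 < r" "X \<in> Lam p q r" "Y \<in> Lam p q r" "Lle p q r X Y" "Lle p q r Y X"
  shows "X = Y"
proof -
  obtain x y where e: "X = cls p q r x" "Y = cls p q r y" using assms(3,4) Lam_iff by metis
  obtain u v where u: "lrel p q r y (tadd x u)" and v: "lrel p q r x (tadd y v)"
    using assms(5,6) e Lle_cls_iff by metis
  then have "lrel p q r x (tadd x (tadd u v))"
    using lrel_tadd equivp_transp[OF equivp_lrel] tadd_assoc by metis
  then have "u = (0, 0, 0)" using lrel_tadd_self[OF assms(1,2)] tadd_eq_0_iff by blast
  then show ?thesis using u e cls_eq_iff equivp_symp[OF equivp_lrel] tadd_0(1) by metis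
qed

lemma Lzero_Lle: "X \<in> Lam p q r \<Longrightarrow> Lle p q r (Lzero p q r) X"
  unfolding Lzero_def Lle_def by (metis Lam_iff tadd_0(2))

lemma cls_eq_Lzero_iff:
  assumes "0 < p" "0 < r"
  shows "cls p q r x = Lzero p q r \<longleftrightarrow> x = (0, 0, 0)"
proof
  assume "cls p q r x = Lzero p q r"
  then have "lrel p q r (0, 0, 0) (tadd (0, 0, 0) x)"
    unfolding Lzero_def cls_eq_iff tadd_0(2) by (rule equivp_symp[OF equivp_lrel])
  then show "x = (0, 0, 0)" using lrel_tadd_self[OF assms] by blast
qed (simp add: Lzero_def)

lemma Lle_cls_bound:
  assumes "0 < p" "0 < r" "Lle p q r (cls p q r (a, b, c)) (cls p q r (m, n, k))"
  shows "a \<le> m + k * p \<and> b \<le> n + k * q \<and> c \<le> k + m * r"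
proof -
  obtain z1 z2 z3 where "lrel p q r (m, n, k) (a + z1, b + z2, c + z3)"
    using assms(3) unfolding Lle_cls_iff tadd_def by (auto split: prod.splits)
  then obtain d :: int where d: "int (a + z1) = int m + d * int p" "int (b + z2) = int n + d * int q"
      "int (c + z3) = int k - d * int r"
    unfolding lrel_iff_Lam_eqv Lam_eqv_def by auto
  have dk: "d \<le> int k"
  proof (cases "d \<le> 0")
    case False
    then have "d \<le> d * int r" using assms(2) by (simp add: mult_le_cancel_left1)
    then show ?thesis using d(3) by linarith
  qed simp
  have dm: "- d \<le> int m"
  proof (cases "- d \<le> 0")
    case False
    then have "- d \<le> - d * int p" using assms(1) by (simp add: mult_le_cancel_left1)
    then show ?thesis using d(1) by linarith
  qed simp
  have "d * int p \<le> int k * int p" "d * int q \<le> int k * int q" "- d * int r \<le> int m * int r"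
    using mult_right_mono[OF dk] mult_right_mono[OF dm] by simp_all
  then have "int a \<le> int (m + k * p)" "int b \<le> int (n + k * q)" "int c \<le> int (k + m * r)"
    using d by simp_all
  then show ?thesis by (simp only: of_nat_le_iff)
qed

lemma finite_Lle_below:
  assumes "0 < p" "0 < r" "lam \<in> Lam p q r"
  shows "finite {X \<in> Lam p q r. Lle p q r X lam}"
proof -
  obtain m n k where lam: "lam = cls p q r (m, n, k)" using assms(3) Lam_iff by (metis prod_cases3)
  have "{X \<in> Lam p q r. Lle p q r X lam}
      \<subseteq> cls p q r ` ({0..m + k * p} \<times> {0..n + k * q} \<times> {0..k + m * r})"
  proof
    fix X assume "X \<in> {X \<in> Lam p q r. Lle p q r X lam}"
    then obtain a b c where "X = cls p q r (a, b, c)" "Lle p q r X lam"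
      using Lam_iff by (metis (no_types, lifting) mem_Collect_eq prod_cases3)
    then show "X \<in> cls p q r ` ({0..m + k * p} \<times> {0..n + k * q} \<times> {0..k + m * r})"
      using Lle_cls_bound[OF assms(1,2)] lam by auto
  qed
  then show ?thesis by (rule finite_subset) simp
qed

lemma Lless_eq: "Lless p q r = (\<lambda>X Y. Lle p q r X Y \<and> X \<noteq> Y)"
  by (simp add: Lless_def fun_eq_iff)

section \<open>Transition maps\<close>

lemma tau_mono:
  assumes "0 < p" "x \<le> y"
  shows "tau p s x \<le> tau p s y"
proof (cases "x div p = y div p")
  case True
  then have "x mod p \<le> y mod p"
    using assms by (metis add_le_cancel_left div_mult_mod_eq)
  with True show ?thesis unfolding tau_def by simp
next
  case False
  moreover have "x div p \<le> y div p" using assms(2) by (rule div_le_mono)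
  ultimately have "x div p + 1 \<le> y div p" by simp
  have "tau p s x \<le> x div p * s + (s - 1)" unfolding tau_def by simp
  also have "\<dots> \<le> (x div p + 1) * s" by simp
  also have "\<dots> \<le> y div p * s" using \<open>x div p + 1 \<le> y div p\<close> by (rule mult_right_mono) simp
  also have "\<dots> \<le> tau p s y" unfolding tau_def by simp
  finally show ?thesis .
qed

lemma tau_of_le:
  assumes "0 < s" "s \<le> p"
  shows "tau s p y = y div s * p + y mod s"
proof -
  have "y mod s < s" using assms(1) by simp
  then have "y mod s \<le> p - 1" using assms(2) by linarith
  then show ?thesis unfolding tau_def by (simp add: min_absorb1)
qed

lemma tau_tau_of_le:
  assumes "0 < s" "s \<le> p"
  shows "tau p s (tau s p y) = y"
proof -
  have "y mod s < p" using assms by (meson mod_less_divisor order_less_le_trans)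
  then have "(y div s * p + y mod s) div p = y div s" "(y div s * p + y mod s) mod p = y mod s"
    by simp_all
  moreover have "y mod s \<le> s - 1" using assms(1) mod_less_divisor[of s y] by linarith
  ultimately have "tau p s (y div s * p + y mod s) = y" unfolding tau_def by (simp add: min_absorb1)
  then show ?thesis by (simp only: tau_of_le[OF assms])
qed

lemma tau_tau_le:
  assumes "0 < s" "s \<le> p"
  shows "tau s p (tau p s x) \<le> x"
proof -
  define b where "b = min (x mod p) (s - 1)"
  have b: "b < s" "b \<le> x mod p" using assms unfolding b_def by auto
  have "tau s p (tau p s x) = tau s p (x div p * s + b)" unfolding tau_def b_def ..
  also have "\<dots> = x div p * p + b" using b(1) by (simp add: tau_of_le[OF assms])
  also have "\<dots> \<le> x" using b(2) by (metis add_le_cancel_left div_mult_mod_eq)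
  finally show ?thesis .
qed

text \<open>Clipping \<open>n\<close> at \<open>s - 1\<close> can only create a zero when \<open>s = 1 < p\<close>.\<close>

lemma tau_eq_0_iff:
  assumes "0 < p" "0 < s" "2 \<le> s \<or> p = 1"
  shows "tau p s x = 0 \<longleftrightarrow> x = 0"
proof
  assume "tau p s x = 0"
  then have "x div p = 0" "min (x mod p) (s - 1) = 0" using assms(2) unfolding tau_def by simp_all
  moreover from this assms(3) have "x mod p = 0" by auto
  ultimately show "x = 0" by (metis div_mult_mod_eq mult_0 add_0)
qed (simp add: tau_def)

lemma tau_add_multiple:
  assumes "0 < p" "int m' = int m + d * int p"
  shows "int (tau p s m') = int (tau p s m) + d * int s"
proof -
  have "int m' mod int p = int m mod int p" "int m' div int p = int m div int p + d"
    unfolding assms(2) using assms(1) by simp_all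
  then have "int (m' mod p) = int (m mod p)" "int (m' div p) = int (m div p) + d"
    by (simp_all only: zmod_int zdiv_int)
  then have "m' mod p = m mod p" "int (m' div p) = int (m div p) + d"
    by (simp_all only: of_nat_eq_iff)
  then show ?thesis unfolding tau_def by (simp add: algebra_simps)
qed

definition tau3 :: "nat \<Rightarrow> nat \<Rightarrow> nat \<Rightarrow> nat \<Rightarrow> nat \<Rightarrow> nat \<Rightarrow> triple \<Rightarrow> triple" where
  "tau3 p q r s t u x = (tau p s (fst x), tau q t (fst (snd x)), tau r u (snd (snd x)))"

lemma lrel_tau3:
  assumes "0 < p" "0 < q" "0 < r" "lrel p q r x y"
  shows "lrel s t u (tau3 p q r s t u x) (tau3 p q r s t u y)"
proof -
  from assms(4) obtain d :: int where d: "int (fst y) = int (fst x) + d * int p"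
    "int (fst (snd y)) = int (fst (snd x)) + d * int q"
    "int (snd (snd y)) = int (snd (snd x)) + (- d) * int r"
    unfolding lrel_iff_Lam_eqv Lam_eqv_def by auto
  show ?thesis
    using tau_add_multiple[OF assms(1) d(1), of s] tau_add_multiple[OF assms(2) d(2), of t]
      tau_add_multiple[OF assms(3) d(3), of u]
    unfolding lrel_iff_Lam_eqv Lam_eqv_def tau3_def by (intro exI[of _ d]) simp
qed

lemma transition_cls:
  assumes "0 < p" "0 < q" "0 < r"
  shows "transition p q r s t u (cls p q r x) = cls s t u (tau3 p q r s t u x)"
proof -
  define y where "y = (SOME y. y \<in> cls p q r x)"
  have "y \<in> cls p q r x" unfolding y_def using mem_cls by (rule someI)
  then have "lrel p q r y x" using equivp_symp[OF equivp_lrel] by (simp add: cls_def)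
  then have "cls s t u (tau3 p q r s t u y) = cls s t u (tau3 p q r s t u x)"
    unfolding cls_eq_iff by (rule lrel_tau3[OF assms])
  then show ?thesis unfolding transition_def y_def[symmetric] tau3_def by (cases y) simp
qed

lemma transition_in_Lam:
  "0 < p \<Longrightarrow> 0 < q \<Longrightarrow> 0 < r \<Longrightarrow> X \<in> Lam p q r \<Longrightarrow> transition p q r s t u X \<in> Lam s t u"
  using transition_cls Lam_iff by metis

lemma ex_tadd_if_le:
  assumes "fst a \<le> fst b" "fst (snd a) \<le> fst (snd b)" "snd (snd a) \<le> snd (snd b)"
  shows "\<exists>w. b = tadd a w"
  using assms
  by (intro exI[of _ "(fst b - fst a, fst (snd b) - fst (snd a), snd (snd b) - snd (snd a))"])
    (auto simp: tadd_def split: prod.splits)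

lemma transition_mono:
  assumes "0 < p" "0 < q" "0 < r" "X \<in> Lam p q r" "Y \<in> Lam p q r" "Lle p q r X Y"
  shows "Lle s t u (transition p q r s t u X) (transition p q r s t u Y)"
proof -
  obtain x y where e: "X = cls p q r x" "Y = cls p q r y" using assms(4,5) Lam_iff by metis
  obtain z where z: "lrel p q r y (tadd x z)" using assms(6) e Lle_cls_iff by metis
  have "\<exists>w. tau3 p q r s t u (tadd x z) = tadd (tau3 p q r s t u x) w"
    by (rule ex_tadd_if_le)
      (auto simp: tau3_def tadd_def split: prod.splits intro!: tau_mono assms(1-3))
  then obtain w where w: "tau3 p q r s t u (tadd x z) = tadd (tau3 p q r s t u x) w" ..
  have "lrel s t u (tau3 p q r s t u y) (tadd (tau3 p q r s t u x) w)"
    using lrel_tau3[OF assms(1-3) z, of s t u] w by simp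
  then show ?thesis unfolding e transition_cls[OF assms(1-3)] Lle_cls_iff by blast
qed

lemma transition_transition_of_le:
  assumes "0 < s" "0 < t" "0 < u" "s \<le> p" "t \<le> q" "u \<le> r" "Y \<in> Lam s t u"
  shows "transition p q r s t u (transition s t u p q r Y) = Y"
proof -
  obtain y where y: "Y = cls s t u y" using assms(7) Lam_iff by metis
  have "tau3 p q r s t u (tau3 s t u p q r y) = y"
    unfolding tau3_def using tau_tau_of_le assms(1-6) by (cases y) simp
  then show ?thesis
    using assms(1-6) by (simp add: y transition_cls)
qed

lemma transition_transition_Lle:
  assumes "0 < s" "0 < t" "0 < u" "s \<le> p" "t \<le> q" "u \<le> r" "X \<in> Lam p q r"
  shows "Lle p q r (transition s t u p q r (transition p q r s t u X)) X"
proof -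
  obtain x where x: "X = cls p q r x" using assms(7) Lam_iff by metis
  have "\<exists>w. x = tadd (tau3 s t u p q r (tau3 p q r s t u x)) w"
    by (rule ex_tadd_if_le) (simp_all add: tau3_def tau_tau_le assms(1-6))
  then obtain w where w: "x = tadd (tau3 s t u p q r (tau3 p q r s t u x)) w" ..
  have "0 < p" "0 < q" "0 < r" using assms(1-6) by auto
  then have "transition s t u p q r (transition p q r s t u X)
      = cls p q r (tau3 s t u p q r (tau3 p q r s t u x))"
    using assms(1-3) by (simp add: x transition_cls)
  then show ?thesis unfolding Lle_def x using w by metis
qed

lemma transition_ne_Lzero:
  assumes "0 < p" "0 < q" "0 < r" "0 < s" "0 < t" "0 < u"
    and "2 \<le> s \<or> p = 1" "2 \<le> t \<or> q = 1" "2 \<le> u \<or> r = 1"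
    and "X \<in> Lam p q r" "X \<noteq> Lzero p q r"
  shows "transition p q r s t u X \<noteq> Lzero s t u"
proof -
  obtain a b c where X: "X = cls p q r (a, b, c)" using assms(10) Lam_iff by (metis prod_cases3)
  have "(a, b, c) \<noteq> (0, 0, 0)" using assms(11) unfolding X cls_eq_Lzero_iff[OF assms(1,3)] .
  then have "tau3 p q r s t u (a, b, c) \<noteq> (0, 0, 0)"
    using assms(1-9) by (simp add: tau3_def tau_eq_0_iff)
  then show ?thesis
    unfolding X transition_cls[OF assms(1-3)] by (simp add: cls_eq_Lzero_iff assms(4,6))
qed

lemma Lle_poset:
  assumes "0 < p" "0 < r"
  shows "reflp_on (Lam p q r) (Lle p q r)" "transp_on (Lam p q r) (Lle p q r)"
    "antisymp_on (Lam p q r) (Lle p q r)"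
proof -
  show "reflp_on (Lam p q r) (Lle p q r)" by (rule reflp_onI) (rule Lle_refl)
  show "transp_on (Lam p q r) (Lle p q r)" by (rule transp_onI) (rule Lle_trans)
  show "antisymp_on (Lam p q r) (Lle p q r)" by (rule antisymp_onI) (rule Lle_antisym[OF assms])
qed

lemma transition_order_retraction:
  assumes "0 < s" "0 < t" "0 < u" "s \<le> p" "t \<le> q" "u \<le> r"
    and "2 \<le> s \<or> p = 1" "2 \<le> t \<or> q = 1" "2 \<le> u \<or> r = 1"
  shows "order_retraction (Lam p q r) (Lle p q r) (Lzero p q r) (Lam s t u) (Lle s t u) (Lzero s t u)
           (transition p q r s t u) (transition s t u p q r)"
proof -
  have pos: "0 < p" "0 < q" "0 < r" using assms(1-6) by auto
  have reverse_cases: "2 \<le> p \<or> s = 1" "2 \<le> q \<or> t = 1" "2 \<le> r \<or> u = 1" using assms(1-6) by auto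
  show ?thesis
  proof (unfold_locales; (rule Lle_poset Lzero_Lle)?)
    show "transition p q r s t u ` Lam p q r \<subseteq> Lam s t u"
      using transition_in_Lam[OF pos] by blast
    show "transition s t u p q r ` Lam s t u \<subseteq> Lam p q r"
      using transition_in_Lam[OF assms(1-3)] by blast
    show "monotone_on (Lam p q r) (Lle p q r) (Lle s t u) (transition p q r s t u)"
      using transition_mono[OF pos] by (intro monotone_onI)
    show "monotone_on (Lam s t u) (Lle s t u) (Lle p q r) (transition s t u p q r)"
      using transition_mono[OF assms(1-3)] by (intro monotone_onI)
    show "transition p q r s t u (transition s t u p q r y) = y" if "y \<in> Lam s t u" for y
      using transition_transition_of_le[OF assms(1-6) that] .
    show "Lle p q r (transition s t u p q r (transition p q r s t u x)) x" if "x \<in> Lam p q r" for x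
      using transition_transition_Lle[OF assms(1-6) that] .
    show "transition p q r s t u x \<noteq> Lzero s t u" if "x \<in> Lam p q r" "x \<noteq> Lzero p q r" for x
      using transition_ne_Lzero[OF pos assms(1-3,7-9) that] .
    show "transition s t u p q r y \<noteq> Lzero p q r" if "y \<in> Lam s t u" "y \<noteq> Lzero s t u" for y
      using transition_ne_Lzero[OF assms(1-3) pos reverse_cases that] .
  qed (use pos assms(1,3) in simp_all)
qed

lemma frobenius_complex_transition:
  assumes "0 < s" "0 < t" "0 < u" "s \<le> p" "t \<le> q" "u \<le> r"
    and "2 \<le> s \<or> p = 1" "2 \<le> t \<or> q = 1" "2 \<le> u \<or> r = 1"
    and "lam \<in> Lplus p q r"
  shows "if transition s t u p q r (transition p q r s t u lam) = lam
         then frobenius_complex p q r lam homotopy_equivalent_space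
                frobenius_complex s t u (transition p q r s t u lam)
         else frobenius_complex p q r lam homotopy_equivalent_space point_space"
proof -
  interpret order_retraction "Lam p q r" "Lle p q r" "Lzero p q r" "Lam s t u" "Lle s t u" "Lzero s t u"
      "transition p q r s t u" "transition s t u p q r"
    by (rule transition_order_retraction[OF assms(1-9)])
  have lam: "lam \<in> Lam p q r" "lam \<noteq> Lzero p q r" using assms(10) by (auto simp: Lplus_def)
  have pos: "0 < p" "0 < q" "0 < r" using assms(1-6) by auto
  have "interval lam \<subseteq> {X \<in> Lam p q r. Lle p q r X lam}" by (auto simp: mem_interval)
  then have finite_interval: "finite (interval lam)"
    using finite_Lle_below[OF pos(1,3) lam(1)] by (rule finite_subset)
  have "interval' (transition p q r s t u lam)
      \<subseteq> {Y \<in> Lam s t u. Lle s t u Y (transition p q r s t u lam)}"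
    by (auto simp: mem_interval')
  then have finite_interval': "finite (interval' (transition p q r s t u lam))"
    using finite_Lle_below[OF assms(1,3) transition_in_Lam[OF pos lam(1)]] by (rule finite_subset)
  show ?thesis
  proof (cases "transition s t u p q r (transition p q r s t u lam) = lam")
    case True
    with interval_homotopy_equivalent[OF lam(1) True finite_interval finite_interval'] show ?thesis
      unfolding frobenius_complex_def Lless_eq by (simp only: simp_thms if_True)
  next
    case False
    with interval_contractible[OF lam False finite_interval] show ?thesis
      unfolding frobenius_complex_def Lless_eq by (simp only: if_False)
  qed
qed

theorem theorem3p4:
  fixes p q r :: nat and lam :: "triple set"
  assumes "0 < p" and "p \<le> q" and "2 \<le> r" and "lam \<in> Lplus p q r"
  shows "(p = 1 \<and> q = 1 \<longrightarrow>
           (if transition 1 1 2 1 1 r (transition 1 1 r 1 1 2 lam) = lam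
            then frobenius_complex 1 1 r lam homotopy_equivalent_space
                   frobenius_complex 1 1 2 (transition 1 1 r 1 1 2 lam)
            else frobenius_complex 1 1 r lam homotopy_equivalent_space point_space))
       \<and> (p = 1 \<and> 2 \<le> q \<longrightarrow>
           (if transition 1 2 2 1 q r (transition 1 q r 1 2 2 lam) = lam
            then frobenius_complex 1 q r lam homotopy_equivalent_space
                   frobenius_complex 1 2 2 (transition 1 q r 1 2 2 lam)
            else frobenius_complex 1 q r lam homotopy_equivalent_space point_space))
       \<and> (2 \<le> p \<longrightarrow>
           (if transition 2 2 2 p q r (transition p q r 2 2 2 lam) = lam
            then frobenius_complex p q r lam homotopy_equivalent_space
                   frobenius_complex 2 2 2 (transition p q r 2 2 2 lam)
            else frobenius_complex p q r lam homotopy_equivalent_space point_space))"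
  by (intro conjI impI; rule frobenius_complex_transition) (use assms in auto)

end
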